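(* For all integers $s\geq 2$ and $r\geq 1$, $$\sum_{i=1}^{s-2}2^{i-1}\binom{2r+i-1}{i}\sigma(s-i,2r+i)+2^{s-1}\sum_{j=0}^{2r-2}(-1)^j\binom{s+j-1}{j}\lambda(s+j)\lambda(2r-j)$$ $$-2^{s-2}\binom{s+2r-2}{s-1}\sum_{p\geq 1}\frac{H_p}{(2p+1)^{s+2r-1}}-2^{s-1}\binom{s+2r-2}{s-1}\lambda(s+2r-1)\ln 2=0,$$ where an empty sum equals $0$.
   Context: $H_p=1+\frac12+\cdots+\frac1p$. For integers $t\geq 1$, $n\geq 1$ let $S_n^{(t)}=\sum_{k=1}^{n}\frac{1}{(2k-1)^t}$, and for integers $s\geq 2$, $t\geq 1$ let $\sigma(s,t)=\sum_{n\geq 1}\frac{S_n^{(t)}}{n^s}$. For real $s>1$, $\lambda(s)=\sum_{n\geq 1}\frac{1}{(2n-1)^s}$. *)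

theory Defs
  imports "HOL-Analysis.Analysis"
begin

definition harmH :: "nat \<Rightarrow> real" where
  "harmH p = (\<Sum>k=1..p. 1 / real k)"

definition S_odd :: "nat \<Rightarrow> nat \<Rightarrow> real" where
  "S_odd t n = (\<Sum>k=1..n. 1 / (2 * real k - 1) ^ t)"

definition sigma :: "nat \<Rightarrow> nat \<Rightarrow> real" where
  "sigma s t = (\<Sum>n. S_odd t (n + 1) / real (n + 1) ^ s)"

definition dlambda :: "real \<Rightarrow> real" where
  "dlambda s = (\<Sum>n. 1 / (2 * real (n + 1) - 1) powr s)"

end

theory Submission
  imports Defs
begin

text \<open>
  Let \<open>y = 2k+1\<close> and \<open>z = 2m+1\<close> range over the odd positive integers, put \<open>a = 2r\<close>, and consider
  the absolutely convergent double series of \<open>1/(z^a (y+z)^s) - 1/(y^a (y+z)^s)\<close>: it vanishes,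
  because exchanging \<open>y\<close> and \<open>z\<close> changes its sign. Expanding \<open>1/(z^a (y+z)^s)\<close> into partial
  fractions with respect to \<open>y\<close> turns every summand into a combination of terms
  \<open>1/(y^b (y+z)^c)\<close>, whose double series is \<open>\<sigma>(c,b)/2^c\<close>, of terms
  \<open>1/(y^b z^c)\<close>, whose double series is \<open>\<lambda>(b) \<lambda>(c)\<close>, and of a single term \<open>1/(y^N (y+z) z)\<close>.
  Summing the last one over \<open>z\<close> first gives \<open>(ln 2 + H_k/2)/y\<close>, which produces the logarithm and
  the harmonic series. Since \<open>a\<close> is even, the leading partial fraction \<open>1/(y^a (y+z)^s)\<close> cancels.
\<close>

lemma has_sum_sum:
  fixes f :: "'i \<Rightarrow> 'a \<Rightarrow> 'b::topological_comm_monoid_add"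
  assumes "finite I" and "\<And>i. i \<in> I \<Longrightarrow> (f i has_sum c i) A"
  shows "((\<lambda>x. \<Sum>i\<in>I. f i x) has_sum (\<Sum>i\<in>I. c i)) A"
  using assms
proof (induction I rule: finite_induct)
  case empty
  then show ?case by simp
next
  case (insert j I)
  have "((\<lambda>x. f j x + (\<Sum>i\<in>I. f i x)) has_sum (c j + (\<Sum>i\<in>I. c i))) A"
    by (intro has_sum_add) (use insert in auto)
  with insert show ?case by simp
qed

lemma has_sum_diff:
  fixes f g :: "'a \<Rightarrow> 'b::topological_ab_group_add"
  assumes "(f has_sum a) A" and "(g has_sum b) A"
  shows "((\<lambda>x. f x - g x) has_sum (a - b)) A"
proof -
  have "((\<lambda>x. - g x) has_sum (- b)) A" using assms(2) by (simp add: has_sum_uminus)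
  from has_sum_add[OF assms(1) this] show ?thesis by simp
qed

lemma has_sum_swap_diff_eq_0:
  fixes g :: "'a \<times> 'a \<Rightarrow> 'b::topological_ab_group_add"
  assumes "(g has_sum S) (A \<times> A)"
  shows "((\<lambda>(x,y). g (y,x) - g (x,y)) has_sum 0) (A \<times> A)"
proof -
  have "((\<lambda>(x,y). g (y,x)) has_sum S) (A \<times> A)" using assms by (rule has_sum_swap[THEN iffD1])
  from has_sum_diff[OF this assms] show ?thesis by (simp add: case_prod_unfold)
qed

definition partial_fraction_sum :: "'a::comm_ring_1 \<Rightarrow> nat \<Rightarrow> nat \<Rightarrow> 'a \<Rightarrow> 'a \<Rightarrow> 'a" where
  "partial_fraction_sum c a s u z = (\<Sum>i<s. c^i * of_nat ((a+i-1) choose i) * u^(a+i) * z^(s-i))"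

lemma partial_fraction_sum_Suc_Suc:
  "partial_fraction_sum c (Suc a) (Suc s) u z =
     u * (partial_fraction_sum c a (Suc s) u z + c * partial_fraction_sum c (Suc a) s u z)"
proof -
  have L: "partial_fraction_sum c (Suc a) (Suc s) u z = u^(Suc a) * z^(Suc s) +
     (\<Sum>i<s. c^(Suc i) * of_nat (((a+i) choose i) + ((a+i) choose (Suc i))) * u^(a+i+2) * z^(s-i))"
    unfolding partial_fraction_sum_def by (subst sum.lessThan_Suc_shift) (simp add: Suc_diff_le)
  have R1: "partial_fraction_sum c a (Suc s) u z = u^a * z^(Suc s) +
     (\<Sum>i<s. c^(Suc i) * of_nat ((a+i) choose (Suc i)) * u^(a+i+1) * z^(s-i))"
    unfolding partial_fraction_sum_def by (subst sum.lessThan_Suc_shift) (simp add: Suc_diff_le)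
  have R2: "partial_fraction_sum c (Suc a) s u z =
      (\<Sum>i<s. c^i * of_nat ((a+i) choose i) * u^(a+i+1) * z^(s-i))"
    unfolding partial_fraction_sum_def by simp
  show ?thesis unfolding L R1 R2
    by (simp add: algebra_simps sum_distrib_left sum.distrib power_Suc)
qed

text \<open>
  With \<open>u = 1/y\<close>, \<open>q = 1/z\<close> and \<open>p = 1/(y+z)\<close> the hypothesis is \<open>1/z - 1/(y+z) = y/(z (y+z))\<close>, and
  the conclusion is the partial fraction expansion of \<open>1/(z^a (y+z)^s)\<close> with respect to \<open>y\<close>.
\<close>
lemma power_mult_power_partial_fractions:
  fixes u p q :: "'a::comm_ring_1"
  assumes rel: "u * (q - p) = p * q" and "a + s \<ge> 1"
  shows "q^a * p^s = (-1)^a * partial_fraction_sum 1 a s u p + partial_fraction_sum (-1) s a u q"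
  using assms(2)
proof (induction "a + s" arbitrary: a s rule: less_induct)
  case less
  consider "a = 0" | "s = 0" | a' s' where "a = Suc a'" "s = Suc s'"
    by (cases a; cases s) auto
  then show ?case
  proof cases
    case 1
    with less.prems obtain s' where s: "s = Suc s'" by (cases s) auto
    have "partial_fraction_sum 1 0 s u p = p^s"
      unfolding partial_fraction_sum_def s by (subst sum.lessThan_Suc_shift) (simp add: binomial_eq_0)
    with 1 show ?thesis by (simp add: partial_fraction_sum_def)
  next
    case 2
    with less.prems obtain a' where a: "a = Suc a'" by (cases a) auto
    have "partial_fraction_sum (-1) 0 a u q = q^a"
      unfolding partial_fraction_sum_def a by (subst sum.lessThan_Suc_shift) (simp add: binomial_eq_0)
    with 2 show ?thesis by (simp add: partial_fraction_sum_def)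
  next
    case (3 a' s')
    have IH1: "q^(Suc a') * p^s' = (-1)^(Suc a') * partial_fraction_sum 1 (Suc a') s' u p
        + partial_fraction_sum (-1) s' (Suc a') u q"
      using less.hyps[of "Suc a'" s'] 3 by simp
    have IH2: "q^a' * p^(Suc s') = (-1)^a' * partial_fraction_sum 1 a' (Suc s') u p
        + partial_fraction_sum (-1) (Suc s') a' u q"
      using less.hyps[of a' "Suc s'"] 3 by simp
    have "q^a * p^s = q^a' * p^s' * (p * q)" using 3 by (simp add: algebra_simps)
    also have "\<dots> = u * (q^(Suc a') * p^s' - q^a' * p^(Suc s'))"
      unfolding rel[symmetric] by (simp add: algebra_simps)
    also have "\<dots> = (-1)^a * partial_fraction_sum 1 a s u p + partial_fraction_sum (-1) s a u q"
      unfolding IH1 IH2 3 partial_fraction_sum_Suc_Suc by (simp add: algebra_simps)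
    finally show ?thesis .
  qed
qed

lemma inverse_power_difference_expansion:
  fixes y z :: real and a s :: nat
  assumes y: "y > 0" and z: "z > 0" and ev: "even a"
  shows "1/(z^(a+2)*(y+z)^(s+2)) - 1/(y^(a+2)*(y+z)^(s+2)) =
     (\<Sum>i<s. real ((a+2+i) choose (i+1)) / (y^(a+3+i)*(y+z)^(s+1-i)))
   + (\<Sum>t<Suc a. (-1)^t * real ((s+1+t) choose t) / (y^(s+2+t)*z^(a+2-t)))
   - real ((s+a+2) choose (s+1)) / (y^(s+a+2)*(y+z)*z)"
proof -
  define x where "x = y + z"
  have x: "x > 0" using y z by (simp add: x_def)
  have "(1/y) * (1/z - 1/x) = (1/x) * (1/z)" using y z x by (simp add: x_def field_simps)
  then have expansion: "(1/z)^(a+2) * (1/x)^(s+2) = (-1)^(a+2) * partial_fraction_sum 1 (a+2) (s+2) (1/y) (1/x)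
      + partial_fraction_sum (-1) (s+2) (a+2) (1/y) (1/z)"
    by (rule power_mult_power_partial_fractions) simp
  have first: "partial_fraction_sum 1 (a+2) (s+2) (1/y) (1/x) = 1/(y^(a+2)*x^(s+2))
      + (\<Sum>i<s. real ((a+2+i) choose (i+1)) / (y^(a+3+i)*x^(s+1-i)))
      + real ((s+a+2) choose (s+1)) / (y^(s+a+2)*y*x)"
    unfolding partial_fraction_sum_def
    apply (simp only: add_2_eq_Suc' sum.lessThan_Suc[of _ "Suc s"])
    apply (subst sum.lessThan_Suc_shift)
    apply (simp add: power_one_over Suc_diff_le algebra_simps del: binomial_Suc_Suc)
    apply (intro sum.cong refl)
    apply (simp add: power_add power3_eq_cube del: binomial_Suc_Suc)
    done
  have "Suc (Suc (a+s)) choose Suc s = Suc (Suc (a+s)) choose Suc a"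
    using binomial_symmetric[of "Suc s" "Suc (Suc (a+s))"] by simp
  then have second: "partial_fraction_sum (-1) (s+2) (a+2) (1/y) (1/z) =
      (\<Sum>t<Suc a. (-1)^t * real ((s+1+t) choose t) / (y^(s+2+t)*z^(a+2-t)))
      - real ((s+a+2) choose (s+1)) / (y^(s+a+2)*y*z)"
    unfolding partial_fraction_sum_def
    apply (simp only: add_2_eq_Suc' sum.lessThan_Suc[of _ "Suc a"])
    using ev apply (simp add: power_one_over Suc_diff_le algebra_simps del: binomial_Suc_Suc)
    done
  have merge: "c/(Y*y*x) - c/(Y*y*z) = - c/(Y*x*z)" if "Y > 0" for c Y :: real
    using that x y z by (simp add: divide_simps) (simp add: x_def algebra_simps)
  have last: "real ((s+a+2) choose (s+1)) / (y^(s+a+2)*y*x)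
      - real ((s+a+2) choose (s+1)) / (y^(s+a+2)*y*z) = - real ((s+a+2) choose (s+1)) / (y^(s+a+2)*x*z)"
    by (rule merge) (use y in simp)
  have "(1/z)^(a+2) * (1/x)^(s+2) = 1/(z^(a+2)*x^(s+2))" by (simp add: power_one_over)
  with expansion have "1/(z^(a+2)*x^(s+2)) - 1/(y^(a+2)*x^(s+2)) =
     (\<Sum>i<s. real ((a+2+i) choose (i+1)) / (y^(a+3+i)*x^(s+1-i)))
    + (\<Sum>t<Suc a. (-1)^t * real ((s+1+t) choose t) / (y^(s+2+t)*z^(a+2-t)))
    + (real ((s+a+2) choose (s+1)) / (y^(s+a+2)*y*x) - real ((s+a+2) choose (s+1)) / (y^(s+a+2)*y*z))"
    unfolding first second using ev by simp
  from this[unfolded last] show ?thesis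
    unfolding x_def by (simp only: diff_conv_add_uminus minus_divide_left)
qed

lemma summable_inverse_Suc_power:
  assumes "c \<ge> 2"
  shows "summable (\<lambda>n. 1/(real n+1)^c)"
proof -
  have "summable (\<lambda>n. inverse (real (Suc n) ^ c))"
    using inverse_power_summable[OF assms, where 'a=real] by (subst summable_Suc_iff)
  then show ?thesis by (simp add: inverse_eq_divide add.commute)
qed

lemma summable_on_dominated_by_inverse_squares:
  fixes D :: "nat \<Rightarrow> nat \<Rightarrow> real"
  assumes "\<And>k m. (real k+1)^2 * (real m+1)^2 \<le> D k m"
  shows "(\<lambda>(k,m). 1 / D k m) summable_on UNIV"
proof -
  let ?Z = "\<Sum>m. 1/(real m+1)^2"
  have Z: "((\<lambda>m. 1/(real m+1)^2) has_sum ?Z) UNIV"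
    by (rule sums_nonneg_imp_has_sum) (auto intro: summable_sums summable_inverse_Suc_power)
  have "((\<lambda>(k,m). 1/((real k+1)^2*(real m+1)^2)) summable_on Sigma UNIV (\<lambda>_. UNIV))"
  proof (rule summable_on_SigmaI)
    show "((\<lambda>m. (\<lambda>(k,m). 1/((real k+1)^2*(real m+1)^2)) (k,m)) has_sum (1/(real k+1)^2 * ?Z)) UNIV"
      for k
      using has_sum_cmult_right[OF Z, of "1/(real k+1)^2"] by simp
    show "(\<lambda>k. 1/(real k+1)^2 * ?Z) summable_on UNIV"
      using has_sum_cmult_left[OF Z, of ?Z] by (auto simp: summable_on_def)
  qed auto
  then have bound: "(\<lambda>(k,m). 1/((real k+1)^2*(real m+1)^2)) summable_on UNIV" by simp
  have pos: "0 < D k m" for k m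
  proof -
    have "0 < (real k+1)^2 * (real m+1)^2" by simp
    with assms[of k m] show ?thesis by linarith
  qed
  from bound show ?thesis
    by (rule summable_on_comparison_test) (auto simp: assms frac_le less_imp_le pos)
qed

lemma Suc_square_le_odd_power:
  assumes "b \<ge> 2"
  shows "(real k + 1)^2 \<le> (2*real k + 1)^b"
proof -
  have "(real k+1)^2 \<le> (2*real k+1)^2" by (rule power_mono) auto
  also have "\<dots> \<le> (2*real k+1)^b" by (rule power_increasing[OF assms]) auto
  finally show ?thesis .
qed

lemma has_sum_dlambda:
  assumes "c \<ge> 2"
  shows "((\<lambda>m. 1/(2*real m+1)^c) has_sum dlambda (real c)) UNIV"
proof -
  have "summable (\<lambda>m. 1/(2*real m+1)^c)"
  proof (rule summable_comparison_test[OF _ summable_inverse_Suc_power[OF assms]])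
    show "\<exists>N. \<forall>n\<ge>N. norm (1/(2*real n+1)^c) \<le> 1/(real n+1)^c"
      by (intro exI[of _ 0] allI impI) (auto intro!: divide_left_mono power_mono mult_pos_pos)
  qed
  moreover have "1 / (2 * real (n + 1) - 1) powr real c = 1/(2*real n+1)^c" for n
    by (simp add: powr_realpow add.commute)
  ultimately have "(\<lambda>m. 1/(2*real m+1)^c) sums dlambda (real c)"
    unfolding dlambda_def by (simp add: summable_sums)
  then show ?thesis by (rule sums_nonneg_imp_has_sum) simp
qed

lemma has_sum_dlambda_mult_dlambda:
  assumes b: "b \<ge> 2" and c: "c \<ge> 2"
  shows "((\<lambda>(k,m). 1/((2*real k+1)^b*(2*real m+1)^c)) has_sum (dlambda (real b) * dlambda (real c))) UNIV"
proof -
  have "((\<lambda>(k,m). 1/((2*real k+1)^b*(2*real m+1)^c)) has_sum (dlambda (real b) * dlambda (real c)))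
      (Sigma UNIV (\<lambda>_. UNIV))"
  proof (rule has_sum_SigmaI)
    show "((\<lambda>m. (\<lambda>(k,m). 1/((2*real k+1)^b*(2*real m+1)^c)) (k,m)) has_sum (1/(2*real k+1)^b * dlambda (real c))) UNIV"
      for k
      using has_sum_cmult_right[OF has_sum_dlambda[OF c], of "1/(2*real k+1)^b"] by simp
    show "((\<lambda>k. 1/(2*real k+1)^b * dlambda (real c)) has_sum (dlambda (real b) * dlambda (real c))) UNIV"
      by (rule has_sum_cmult_left[OF has_sum_dlambda[OF b]])
    show "(\<lambda>(k,m). 1/((2*real k+1)^b*(2*real m+1)^c)) summable_on Sigma UNIV (\<lambda>_. UNIV)"
      unfolding UNIV_Times_UNIV
      by (rule summable_on_dominated_by_inverse_squares)
         (intro mult_mono Suc_square_le_odd_power b c; simp)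
  qed
  then show ?thesis by simp
qed

lemma has_sum_dlambda_combination:
  assumes "finite I" and "\<And>i. i \<in> I \<Longrightarrow> b i \<ge> 2" and "\<And>i. i \<in> I \<Longrightarrow> c i \<ge> 2"
  shows "((\<lambda>(k,m). \<Sum>i\<in>I. w i / ((2*real k+1)^b i * (2*real m+1)^c i))
      has_sum (\<Sum>i\<in>I. w i * (dlambda (real (b i)) * dlambda (real (c i))))) UNIV"
proof -
  have "((\<lambda>x. \<Sum>i\<in>I. w i * (\<lambda>(k,m). 1/((2*real k+1)^b i * (2*real m+1)^c i)) x)
      has_sum (\<Sum>i\<in>I. w i * (dlambda (real (b i)) * dlambda (real (c i))))) UNIV"
    using assms by (intro has_sum_sum has_sum_cmult_right has_sum_dlambda_mult_dlambda) auto
  then show ?thesis by (simp add: case_prod_unfold)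
qed

lemma S_odd_Suc: "S_odd b (n+1) = (\<Sum>k\<le>n. 1/(2*real k+1)^b)"
proof -
  have "{1..n+1} = {Suc 0..Suc n}" by simp
  then have "S_odd b (n+1) = (\<Sum>k=0..n. 1 / (2 * real (Suc k) - 1) ^ b)"
    unfolding S_odd_def by (simp only: sum.shift_bounds_cl_Suc_ivl)
  then show ?thesis by (simp add: atLeast0AtMost add.commute)
qed

text \<open>Grouping the pairs \<open>(k, m)\<close> by \<open>k + m = n\<close> turns the double series into \<open>\<sigma>(c, b)\<close>.\<close>
lemma has_sum_sigma:
  assumes b: "b \<ge> 2" and c: "c \<ge> 2"
  shows "((\<lambda>(k,m). 1/((2*real k+1)^b*((2*real k+1)+(2*real m+1))^c)) has_sum (sigma c b / 2^c)) UNIV"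
proof -
  define f where "f = (\<lambda>(k,m). 1/((2*real k+1)^b*((2*real k+1)+(2*real m+1))^c))"
  have "(real m+1)^2 \<le> ((2*real k+1)+(2*real m+1))^c" for k m
  proof -
    have "(real m+1)^2 \<le> (2*real m+1)^c" by (rule Suc_square_le_odd_power[OF c])
    also have "\<dots> \<le> ((2*real k+1)+(2*real m+1))^c" by (rule power_mono) auto
    finally show ?thesis .
  qed
  then have "f summable_on UNIV"
    unfolding f_def
    by (intro summable_on_dominated_by_inverse_squares mult_mono Suc_square_le_odd_power b) auto
  then have fV: "(f has_sum infsum f UNIV) UNIV" by (rule has_sum_infsum)
  define h where "h = (\<lambda>(n::nat,k::nat). 1/((2*real k+1)^b*(2*real n+2)^c))"
  have "(f has_sum infsum f UNIV) UNIV = (h has_sum infsum f UNIV) (Sigma UNIV (\<lambda>n. {..n}))"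
    by (rule has_sum_reindex_bij_witness[where j="\<lambda>(k,m). (k+m,k)" and i="\<lambda>(n,k). (k,n-k)"])
       (auto simp: f_def h_def algebra_simps)
  with fV have "(h has_sum infsum f UNIV) (Sigma UNIV (\<lambda>n. {..n}))" by simp
  then have "((\<lambda>n. \<Sum>k\<le>n. h (n,k)) has_sum infsum f UNIV) UNIV"
    by (rule has_sum_SigmaD) simp
  moreover have "(\<Sum>k\<le>n. h (n,k)) = S_odd b (n+1) / real (n+1)^c / 2^c" for n
  proof -
    have "(2*real n+2)^c = 2^c * real (n+1)^c" by (simp add: power_mult_distrib[symmetric] algebra_simps)
    then show ?thesis unfolding S_odd_Suc h_def by (simp add: sum_divide_distrib mult_ac)
  qed
  ultimately have "(\<lambda>n. 2^c * (S_odd b (n+1) / real (n+1)^c / 2^c)) sums (2^c * infsum f UNIV)"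
    by (intro sums_mult has_sum_imp_sums) simp
  then have "sigma c b = 2^c * infsum f UNIV" unfolding sigma_def by (simp add: sums_iff)
  with fV show ?thesis unfolding f_def by simp
qed

lemma has_sum_sigma_combination:
  assumes "finite I" and "\<And>i. i \<in> I \<Longrightarrow> b i \<ge> 2" and "\<And>i. i \<in> I \<Longrightarrow> c i \<ge> 2"
  shows "((\<lambda>(k,m). \<Sum>i\<in>I. w i / ((2*real k+1)^b i * ((2*real k+1)+(2*real m+1))^c i))
      has_sum (\<Sum>i\<in>I. w i * (sigma (c i) (b i) / 2^c i))) UNIV"
proof -
  have "((\<lambda>x. \<Sum>i\<in>I. w i * (\<lambda>(k,m). 1/((2*real k+1)^b i * ((2*real k+1)+(2*real m+1))^c i)) x)
      has_sum (\<Sum>i\<in>I. w i * (sigma (c i) (b i) / 2^c i))) UNIV"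
    using assms by (intro has_sum_sum has_sum_cmult_right has_sum_sigma) auto
  then show ?thesis by (simp add: case_prod_unfold)
qed

lemma harmH_nonneg: "harmH k \<ge> 0"
  unfolding harmH_def by (intro sum_nonneg) auto

lemma harmH_le: "harmH k \<le> real k"
proof -
  have "harmH k \<le> (\<Sum>i=1..k. 1)" unfolding harmH_def by (intro sum_mono) auto
  then show ?thesis by simp
qed

lemma harmH_telescoping_sums: "(\<lambda>m. 1/real (m+1) - 1/real (m+k+1)) sums harmH k"
proof -
  have "(\<lambda>m. \<Sum>j<k. 1/real (m+j+1) - 1/real (Suc m+j+1)) sums (\<Sum>j<k. 1/real (j+1))"
  proof (rule sums_sum)
    fix j
    have "(\<lambda>n. 1/real (n+(j+1))) \<longlonglongrightarrow> 0"
      by (rule LIMSEQ_ignore_initial_segment[OF lim_1_over_n])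
    then have "(\<lambda>n. 1/real (n+j+1)) \<longlonglongrightarrow> 0" by (simp add: add.assoc)
    from telescope_sums'[OF this]
    show "(\<lambda>m. 1/real (m+j+1) - 1/real (Suc m+j+1)) sums (1/real (j+1))" by simp
  qed
  moreover have "(\<Sum>j<k. 1/real (m+j+1) - 1/real (Suc m+j+1)) = 1/real (m+1) - 1/real (m+k+1)" for m
    using sum_lessThan_telescope'[of "\<lambda>j. 1/real (m+j+1)" k]
    by (simp add: add.commute add.left_commute)
  moreover have "(\<Sum>j<k. 1/real (j+1)) = harmH k"
    unfolding harmH_def by (simp add: sum.atLeast1_atMost_eq)
  ultimately show ?thesis by simp
qed

text \<open>
  Writing \<open>1/((y+z) z) = (1/z - 1/(y+z))/y\<close> with \<open>y = 2k+1\<close>, \<open>z = 2m+1\<close>, the bracket is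
  \<open>(1/(2m+1) - 1/(2m+2)) + (1/(m+1) - 1/(m+k+1))/2\<close>: an alternating harmonic block plus a
  telescoping term.
\<close>
lemma inverse_odd_sum_mult_odd_sums:
  "(\<lambda>m. 1/(((2*real k+1) + (2*real m+1)) * (2*real m+1))) sums ((ln 2 + harmH k/2)/(2*real k+1))"
proof -
  have "(\<lambda>m. ((inverse (real (2*m+1)) - inverse (real (2*m+2))) + (1/real (m+1) - 1/real (m+k+1))/2)
      / (2*real k+1)) sums ((ln 2 + harmH k/2)/(2*real k+1))"
    by (intro sums_divide sums_add alternating_harmonic_series_sums' harmH_telescoping_sums)
  moreover have "((inverse (real (2*m+1)) - inverse (real (2*m+2))) + (1/real (m+1) - 1/real (m+k+1))/2)
      / (2*real k+1) = 1/(((2*real k+1) + (2*real m+1)) * (2*real m+1))" for m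
  proof -
    have "2*real m+1 \<noteq> 0" "real m+1 \<noteq> 0" "real m + real k+1 \<noteq> 0" "2*real k+1 \<noteq> 0"
      "2*real k + 1 + (2*real m+1) \<noteq> 0"
      by (simp_all add: add_nonneg_eq_0_iff)
    then show ?thesis by (simp add: divide_simps) (simp add: algebra_simps)
  qed
  ultimately show ?thesis by simp
qed

lemma harmH_odd_power_sums:
  assumes "N \<ge> 2"
  shows "(\<lambda>k. harmH k/(2*real k+1)^(N+1)) sums (\<Sum>p. harmH (p+1)/(2*real (p+1)+1)^(N+1))"
proof -
  have "summable (\<lambda>k. 1/(2*real k+1)^N)"
    using has_sum_dlambda[OF assms] has_sum_imp_sums sums_summable by blast
  then have "summable (\<lambda>k. harmH k/(2*real k+1)^(N+1))"
  proof (rule summable_comparison_test[rotated], intro exI[of _ 0] allI impI)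
    fix n :: nat
    have "harmH n/(2*real n+1)^(N+1) \<le> (2*real n+1)/(2*real n+1)^(N+1)"
      using harmH_le[of n] by (intro divide_right_mono) auto
    also have "\<dots> = 1/(2*real n+1)^N"
      by (simp add: add_nonneg_eq_0_iff)
    finally show "norm (harmH n/(2*real n+1)^(N+1)) \<le> 1/(2*real n+1)^N"
      using harmH_nonneg[of n] by simp
  qed
  then have "summable (\<lambda>p. harmH (Suc p)/(2*real (Suc p)+1)^(N+1))"
    by (rule summable_Suc_iff[THEN iffD2])
  then have "(\<lambda>p. harmH (Suc p)/(2*real (Suc p)+1)^(N+1)) sums (\<Sum>p. harmH (p+1)/(2*real (p+1)+1)^(N+1))"
    by (simp add: summable_sums)
  then show ?thesis by (subst (asm) sums_Suc_iff) (simp add: harmH_def)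
qed

lemma has_sum_ln2_harmH:
  assumes N: "N \<ge> 2"
  shows "((\<lambda>(k,m). 1/((2*real k+1)^N*((2*real k+1)+(2*real m+1))*(2*real m+1))) has_sum
     (ln 2 * dlambda (real (N+1)) + (\<Sum>p. harmH (p+1)/(2*real (p+1)+1)^(N+1))/2)) UNIV"
proof -
  define T where "T = (\<Sum>p. harmH (p+1)/(2*real (p+1)+1)^(N+1))"
  have "(\<lambda>k. ln 2 * (1/(2*real k+1)^(N+1)) + harmH k/(2*real k+1)^(N+1)/2)
      sums (ln 2 * dlambda (real (N+1)) + T/2)"
    using has_sum_dlambda[of "N+1"] N unfolding T_def
    by (intro sums_add sums_mult sums_divide harmH_odd_power_sums has_sum_imp_sums) auto
  moreover have "ln 2 * (1/(2*real k+1)^(N+1)) + harmH k/(2*real k+1)^(N+1)/2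
      = 1/(2*real k+1)^N * ((ln 2 + harmH k/2)/(2*real k+1))" for k
    by (simp add: field_simps add_nonneg_eq_0_iff)
  ultimately have outer: "(\<lambda>k. 1/(2*real k+1)^N * ((ln 2 + harmH k/2)/(2*real k+1)))
      sums (ln 2 * dlambda (real (N+1)) + T/2)"
    by simp
  define f where "f = (\<lambda>(k,m). 1/((2*real k+1)^N*((2*real k+1)+(2*real m+1))*(2*real m+1)))"
  have "(f has_sum (ln 2 * dlambda (real (N+1)) + T/2)) (Sigma UNIV (\<lambda>_. UNIV))"
  proof (rule has_sum_SigmaI)
    fix k :: nat
    have "((\<lambda>m. 1/(((2*real k+1) + (2*real m+1)) * (2*real m+1))) has_sum ((ln 2 + harmH k/2)/(2*real k+1))) UNIV"
      by (rule sums_nonneg_imp_has_sum[OF inverse_odd_sum_mult_odd_sums]) simp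
    from has_sum_cmult_right[OF this, of "1/(2*real k+1)^N"]
    show "((\<lambda>m. f (k,m)) has_sum (1/(2*real k+1)^N * ((ln 2 + harmH k/2)/(2*real k+1)))) UNIV"
      unfolding f_def by (simp add: mult.assoc)
  next
    show "((\<lambda>k. 1/(2*real k+1)^N * ((ln 2 + harmH k/2)/(2*real k+1))) has_sum (ln 2 * dlambda (real (N+1)) + T/2)) UNIV"
      by (rule sums_nonneg_imp_has_sum[OF outer]) (simp add: harmH_nonneg add_nonneg_nonneg)
  next
    have "(real m+1)^2 \<le> ((2*real k+1)+(2*real m+1))*(2*real m+1)" for k m
      unfolding power2_eq_square by (rule mult_mono) auto
    then show "f summable_on Sigma UNIV (\<lambda>_. UNIV)"
      unfolding UNIV_Times_UNIV f_def mult.assoc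
      by (intro summable_on_dominated_by_inverse_squares mult_mono Suc_square_le_odd_power N) auto
  qed
  then show ?thesis unfolding f_def T_def by simp
qed

lemma odd_double_series_identity:
  fixes s a :: nat
  assumes ev: "even a"
  shows "(\<Sum>i<s. real ((a+2+i) choose (i+1)) * (sigma (s+1-i) (a+3+i) / 2^(s+1-i)))
     + (\<Sum>t<Suc a. (-1)^t * real ((s+1+t) choose t) * (dlambda (real (s+2+t)) * dlambda (real (a+2-t))))
     - real ((s+a+2) choose (s+1))
         * (ln 2 * dlambda (real (s+a+3)) + (\<Sum>p. harmH (p+1)/(2*real (p+1)+1)^(s+a+3))/2) = 0"
    (is "?A + ?B - ?C = 0")
proof -
  define Y where "Y = (\<lambda>k::nat. 2*real k+1)"
  have Y_pos: "Y k > 0" for k unfolding Y_def by simp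
  define F where "F = (\<lambda>(k,m). 1/(Y m^(a+2)*(Y k+Y m)^(s+2)) - 1/(Y k^(a+2)*(Y k+Y m)^(s+2)))"
  define T1 where "T1 = (\<lambda>(k,m). \<Sum>i<s. real ((a+2+i) choose (i+1)) / (Y k^(a+3+i)*(Y k+Y m)^(s+1-i)))"
  define T2 where "T2 = (\<lambda>(k,m). \<Sum>t<Suc a. (-1)^t * real ((s+1+t) choose t) / (Y k^(s+2+t)*Y m^(a+2-t)))"
  define T3 where "T3 = (\<lambda>(k,m). real ((s+a+2) choose (s+1)) / (Y k^(s+a+2)*(Y k+Y m)*Y m))"
  have "((\<lambda>(k,m). 1/((2*real k+1)^(a+2)*((2*real k+1)+(2*real m+1))^(s+2))) has_sum
      (sigma (s+2) (a+2) / 2^(s+2))) (UNIV \<times> UNIV)"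
    unfolding UNIV_Times_UNIV by (rule has_sum_sigma) auto
  from has_sum_swap_diff_eq_0[OF this] have "(F has_sum 0) UNIV"
    by (simp add: F_def Y_def add.commute case_prod_unfold)
  moreover have "F = (\<lambda>x. T1 x + T2 x - T3 x)"
    using inverse_power_difference_expansion[OF Y_pos Y_pos ev]
    by (auto simp: fun_eq_iff F_def T1_def T2_def T3_def)
  moreover have "(T1 has_sum ?A) UNIV"
    unfolding T1_def Y_def by (rule has_sum_sigma_combination) auto
  moreover have "(T2 has_sum ?B) UNIV"
    unfolding T2_def Y_def by (rule has_sum_dlambda_combination) auto
  moreover have "(T3 has_sum ?C) UNIV"
    using has_sum_cmult_right[OF has_sum_ln2_harmH[of "s+a+2"], of "real ((s+a+2) choose (s+1))"]
    by (simp add: T3_def Y_def case_prod_unfold numeral_3_eq_3)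
  ultimately have "(F has_sum 0) UNIV" "(F has_sum (?A + ?B - ?C)) UNIV"
    by (auto intro: has_sum_diff has_sum_add)
  then show ?thesis by (rule has_sum_unique[symmetric])
qed

theorem mainTheorem11:
  fixes s r :: nat
  assumes "s \<ge> 2" and "r \<ge> 1"
  shows "(\<Sum>i=1..s-2. 2 ^ (i - 1) * real ((2*r + i - 1) choose i) * sigma (s - i) (2*r + i))
       + 2 ^ (s - 1) * (\<Sum>j=0..2*r-2. (-1) ^ j * real ((s + j - 1) choose j)
                          * dlambda (real (s + j)) * dlambda (real (2*r - j)))
       - 2 ^ (s - 2) * real ((s + 2*r - 2) choose (s - 1))
           * (\<Sum>p. harmH (p + 1) / (2 * real (p + 1) + 1) ^ (s + 2*r - 1))
       - 2 ^ (s - 1) * real ((s + 2*r - 2) choose (s - 1)) * dlambda (real (s + 2*r - 1)) * ln 2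
       = 0"
proof -
  obtain s' where s: "s = s'+2" using assms(1) by (metis add.commute le_Suc_ex)
  obtain a where a: "2*r = a+2" "even a" using assms(2) by (intro that[of "2*r-2"]) auto
  have sigma_sum: "(\<Sum>i=1..s-2. 2^(i-1) * real ((2*r+i-1) choose i) * sigma (s-i) (2*r+i))
      = 2^(s'+1) * (\<Sum>i<s'. real ((a+2+i) choose (i+1)) * (sigma (s'+1-i) (a+3+i) / 2^(s'+1-i)))"
    unfolding sum_distrib_left using s a
    by (simp add: sum.atLeast1_atMost_eq del: sum.lessThan_Suc)
       (intro sum.cong refl, auto simp: Suc_diff_le numeral_3_eq_3 power_diff)
  have lambda_sum: "(\<Sum>j=0..2*r-2. (-1)^j * real ((s+j-1) choose j) * dlambda (real (s+j)) * dlambda (real (2*r-j)))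
      = (\<Sum>t<Suc a. (-1)^t * real ((s'+1+t) choose t) * (dlambda (real (s'+2+t)) * dlambda (real (a+2-t))))"
    using s a by (intro sum.cong) (auto simp: atLeast0AtMost lessThan_Suc_atMost algebra_simps)
  have "s+2*r-2 = s'+a+2" "s-1 = s'+1" "s+2*r-1 = s'+a+3" "s-2 = s'" using s a by auto
  with arg_cong[OF odd_double_series_identity[OF a(2), of s'], of "\<lambda>x. 2^(s'+1) * x"] show ?thesis
    unfolding sigma_sum lambda_sum by (simp add: field_simps)
qed

end
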